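(* Let $1\le p\le\infty$, let $X$ be a real Banach space and let $U$ be an open convex subset of $X$. Suppose that for every real Banach space $Y$ and every mapping $f\in C^{1u}(U,Y)$ such that $f'$ takes $U$-bounded subsets of $U$ into $p$-$(DPL)$ subsets of $L(X,Y)$, it follows that $f':U\to L(X,Y)$ is compact and $f'(x)\in K(X,Y)$ for all $x\in U$. Then $X^*$ has the Schur property.
   Context: $C^{1u}(U,Y)$ is the space of (Fréchet) differentiable mappings $f:U\to Y$ whose derivative $f':U\to L(X,Y)$ is uniformly continuous on $U$-bounded subsets of $U$. A subset $B\subset U$ is $U$-bounded if it is bounded and its distance to the boundary of $U$ is strictly positive. A mapping $h:U\to E$ is compact if it takes $U$-bounded subsets of $U$ into relatively compact subsets of $E$. $K(X,Y)$ is the space of compact operators. A sequence $(x_n)$ in $X$ is weakly $p$-summable if $(x^*(x_n))_n\in\ell_p$ for every $x^*\in X^*$ (for $p=\infty$: weakly null). A bounded set in $X$ is Dunford-Pettis if every weakly null sequence in $X^*$ converges to $0$ uniformly on it. A $p$-Right null sequence is a weakly $p$-summable sequence whose set of terms is a Dunford-Pettis set. A set $K\subset L(X,Y)$ is a $p$-$(DPL)$ set if $\lim_n\sup_{T\in K}\|T(x_n)\|=0$ for every $p$-Right null sequence $(x_n)$ in $X$. A Banach space has the Schur property if every weakly null sequence in it is norm null. *)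

theory Defs
  imports "HOL-Analysis.Analysis"
begin

definition weakly_null :: "(nat \<Rightarrow> 'v::real_normed_vector) \<Rightarrow> bool" where
  "weakly_null x \<longleftrightarrow> (\<forall>\<phi>::'v \<Rightarrow>\<^sub>L real. (\<lambda>n. blinfun_apply \<phi> (x n)) \<longlonglongrightarrow> 0)"

definition weakly_p_summable :: "ereal \<Rightarrow> (nat \<Rightarrow> 'v::real_normed_vector) \<Rightarrow> bool" where
  "weakly_p_summable p x \<longleftrightarrow>
     (if p = \<infinity> then weakly_null x
      else (\<forall>\<phi>::'v \<Rightarrow>\<^sub>L real. summable (\<lambda>n. \<bar>blinfun_apply \<phi> (x n)\<bar> powr real_of_ereal p)))"

definition dunford_pettis_set :: "'v::real_normed_vector set \<Rightarrow> bool" where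
  "dunford_pettis_set B \<longleftrightarrow> bounded B \<and>
     (\<forall>\<psi>::nat \<Rightarrow> ('v \<Rightarrow>\<^sub>L real). weakly_null \<psi> \<longrightarrow>
        (\<forall>e>0. eventually (\<lambda>n. \<forall>x\<in>B. \<bar>blinfun_apply (\<psi> n) x\<bar> < e) sequentially))"

definition p_right_null :: "ereal \<Rightarrow> (nat \<Rightarrow> 'v::real_normed_vector) \<Rightarrow> bool" where
  "p_right_null p x \<longleftrightarrow> weakly_p_summable p x \<and> dunford_pettis_set (range x)"

definition p_DPL_set :: "ereal \<Rightarrow> ('a::real_normed_vector \<Rightarrow>\<^sub>L 'b::real_normed_vector) set \<Rightarrow> bool" where
  "p_DPL_set p K \<longleftrightarrow> (\<forall>x. p_right_null p x \<longrightarrow>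
     (\<forall>e>0. eventually (\<lambda>n. \<forall>T\<in>K. norm (blinfun_apply T (x n)) < e) sequentially))"

definition U_bounded :: "'a::real_normed_vector set \<Rightarrow> 'a set \<Rightarrow> bool" where
  "U_bounded U B \<longleftrightarrow> B \<subseteq> U \<and> bounded B \<and>
     (\<exists>\<delta>>0. \<forall>b\<in>B. \<forall>z\<in>frontier U. \<delta> \<le> dist b z)"

definition C1u :: "'a::real_normed_vector set \<Rightarrow> ('a \<Rightarrow> 'b::real_normed_vector) \<Rightarrow> ('a \<Rightarrow> ('a \<Rightarrow>\<^sub>L 'b)) \<Rightarrow> bool" where
  "C1u U f f' \<longleftrightarrow> (\<forall>x\<in>U. (f has_derivative blinfun_apply (f' x)) (at x)) \<and>
     (\<forall>B. U_bounded U B \<longrightarrow> uniformly_continuous_on B f')"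

definition compact_map :: "'a::real_normed_vector set \<Rightarrow> ('a \<Rightarrow> 'e::metric_space) \<Rightarrow> bool" where
  "compact_map U h \<longleftrightarrow> (\<forall>B. U_bounded U B \<longrightarrow> compact (closure (h ` B)))"

definition compact_operator :: "('a::real_normed_vector \<Rightarrow>\<^sub>L 'b::real_normed_vector) \<Rightarrow> bool" where
  "compact_operator T \<longleftrightarrow> compact (closure (blinfun_apply T ` cball 0 1))"

definition schur_property :: "'v::real_normed_vector itself \<Rightarrow> bool" where
  "schur_property _ \<longleftrightarrow> (\<forall>x::nat \<Rightarrow> 'v. weakly_null x \<longrightarrow> x \<longlonglongrightarrow> 0)"

end

theory Submission
  imports Defs
begin

text \<open>If \<open>X\<^sup>*\<close> fails the Schur property, it contains a weakly null sequence \<open>(y\<^sub>n)\<close> of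
  unit vectors. The operator \<open>T v = (y\<^sub>n v)\<^sub>n\<close> from \<open>X\<close> to \<open>\<ell>\<^sub>\<infinity>\<close> is linear, hence its own
  (constant) derivative, and \<open>{T}\<close> is a \<open>p\<close>-(DPL) set: along a \<open>p\<close>-Right null sequence \<open>(x\<^sub>k)\<close>,
  the fact that its range is a Dunford-Pettis set makes \<open>y\<^sub>n x\<^sub>k\<close> uniformly small for \<open>n \<ge> N\<close>, while
  each of the finitely many \<open>y\<^sub>n\<close> with \<open>n < N\<close> tends to \<open>0\<close> along the weakly null \<open>(x\<^sub>k)\<close>.
  So \<open>T\<close> is compact by hypothesis. But \<open>y\<^sub>n \<rightarrow> 0\<close> pointwise, the coordinate evaluations are
  nonexpansive, and pointwise convergence of nonexpansive maps is uniform on the precompact set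
  \<open>T(B\<^sub>X)\<close>; this forces \<open>\<parallel>y\<^sub>n\<parallel> \<rightarrow> 0\<close>.\<close>

lemma weakly_null_subseq:
  assumes "weakly_null x" and "strict_mono r"
  shows "weakly_null (x \<circ> r)"
  unfolding weakly_null_def
proof
  fix \<phi> :: "'a \<Rightarrow>\<^sub>L real"
  have "(\<lambda>n. blinfun_apply \<phi> (x n)) \<longlonglongrightarrow> 0"
    using assms(1) by (simp add: weakly_null_def)
  from LIMSEQ_subseq_LIMSEQ[OF this assms(2)]
  show "(\<lambda>n. blinfun_apply \<phi> ((x \<circ> r) n)) \<longlonglongrightarrow> 0"
    by (simp add: comp_def)
qed

lemma weakly_null_scaleR_bounded:
  assumes "weakly_null x" and "\<And>n. \<bar>c n\<bar> \<le> K"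
  shows "weakly_null (\<lambda>n. c n *\<^sub>R x n)"
  unfolding weakly_null_def
proof
  fix \<phi> :: "'a \<Rightarrow>\<^sub>L real"
  have "(\<lambda>n. blinfun_apply \<phi> (x n)) \<longlonglongrightarrow> 0"
    using assms(1) by (simp add: weakly_null_def)
  then have null: "(\<lambda>n. K * \<bar>blinfun_apply \<phi> (x n)\<bar>) \<longlonglongrightarrow> 0"
    by (intro tendsto_mult_right_zero tendsto_rabs_zero)
  have bound: "norm (blinfun_apply \<phi> (c n *\<^sub>R x n)) \<le> K * \<bar>blinfun_apply \<phi> (x n)\<bar>" for n
  proof -
    have "norm (blinfun_apply \<phi> (c n *\<^sub>R x n)) = \<bar>c n\<bar> * \<bar>blinfun_apply \<phi> (x n)\<bar>"
      by (simp add: blinfun.scaleR_right abs_mult)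
    also have "\<dots> \<le> K * \<bar>blinfun_apply \<phi> (x n)\<bar>"
      by (rule mult_right_mono[OF assms(2) abs_ge_zero])
    finally show ?thesis .
  qed
  show "(\<lambda>n. blinfun_apply \<phi> (c n *\<^sub>R x n)) \<longlonglongrightarrow> 0"
    by (rule Lim_null_comparison[OF always_eventually null]) (intro allI bound)
qed

lemma not_schur_property_imp_weakly_null_unit_seq:
  assumes "\<not> schur_property TYPE('v)"
  obtains y :: "nat \<Rightarrow> 'v::real_normed_vector" where "weakly_null y" and "\<And>n. norm (y n) = 1"
proof -
  obtain x :: "nat \<Rightarrow> 'v" where x: "weakly_null x" and "\<not> x \<longlonglongrightarrow> 0"
    using assms by (auto simp: schur_property_def)
  then obtain \<epsilon> where "\<epsilon> > 0" and "\<not> eventually (\<lambda>n. norm (x n) < \<epsilon>) sequentially"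
    by (auto simp: tendsto_iff)
  then have "frequently (\<lambda>n. \<epsilon> \<le> norm (x n)) cofinite"
    by (simp add: not_eventually not_less cofinite_eq_sequentially)
  then have "infinite {n. \<epsilon> \<le> norm (x n)}"
    by (simp add: INFM_iff_infinite)
  then obtain r :: "nat \<Rightarrow> nat" where r: "strict_mono r" and large: "\<And>n. \<epsilon> \<le> norm (x (r n))"
    using infinite_enumerate by blast
  have pos: "norm (x (r n)) > 0" for n
    using large[of n] \<open>\<epsilon> > 0\<close> by linarith
  have "\<bar>1 / norm (x (r n))\<bar> \<le> 1 / \<epsilon>" for n
    using large[of n] \<open>\<epsilon> > 0\<close> by (simp add: frac_le)
  then have "weakly_null (\<lambda>n. (1 / norm (x (r n))) *\<^sub>R (x \<circ> r) n)"
    by (intro weakly_null_scaleR_bounded weakly_null_subseq x r)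
  moreover have "norm ((1 / norm (x (r n))) *\<^sub>R (x \<circ> r) n) = 1" for n
    using pos[of n] by simp
  ultimately show ?thesis
    using that by blast
qed

lemma weakly_p_summable_imp_weakly_null:
  assumes "0 < p" and "weakly_p_summable p x"
  shows "weakly_null x"
proof (cases "p = \<infinity>")
  case True
  then show ?thesis
    using assms(2) by (simp add: weakly_p_summable_def)
next
  case False
  define r where "r = real_of_ereal p"
  have "r > 0"
    using assms(1) False by (cases p) (auto simp: r_def)
  show ?thesis
    unfolding weakly_null_def
  proof
    fix \<phi> :: "'a \<Rightarrow>\<^sub>L real"
    have "summable (\<lambda>n. \<bar>blinfun_apply \<phi> (x n)\<bar> powr r)"
      using assms(2) False by (simp add: weakly_p_summable_def r_def)
    then have "(\<lambda>n. (\<bar>blinfun_apply \<phi> (x n)\<bar> powr r) powr (1 / r)) \<longlonglongrightarrow> 0"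
      by (rule tendsto_zero_powrI[OF summable_LIMSEQ_zero tendsto_const]) (use \<open>r > 0\<close> in auto)
    then show "(\<lambda>n. blinfun_apply \<phi> (x n)) \<longlonglongrightarrow> 0"
      using \<open>r > 0\<close> by (simp add: powr_powr tendsto_rabs_zero_iff)
  qed
qed

lemma weakly_null_dual_imp_tendsto_pointwise:
  fixes y :: "nat \<Rightarrow> ('a::real_normed_vector \<Rightarrow>\<^sub>L real)"
  assumes "weakly_null y"
  shows "(\<lambda>n. blinfun_apply (y n) v) \<longlonglongrightarrow> 0"
  using assms[unfolded weakly_null_def, rule_format, of "Blinfun (\<lambda>f. blinfun_apply f v)"]
  by (simp add: bounded_linear_Blinfun_apply)

lemma C1u_blinfun: "C1u U (blinfun_apply T) (\<lambda>_. T)"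
  by (auto simp: C1u_def intro!: bounded_linear_imp_has_derivative blinfun.bounded_linear_right
      uniformly_continuous_on_const)

lemma p_DPL_set_subset:
  assumes "p_DPL_set p K" and "L \<subseteq> K"
  shows "p_DPL_set p L"
  unfolding p_DPL_set_def
proof (intro allI impI)
  fix x :: "nat \<Rightarrow> 'a" and e :: real
  assume "p_right_null p x" and "e > 0"
  then have "eventually (\<lambda>n. \<forall>T\<in>K. norm (blinfun_apply T (x n)) < e) sequentially"
    using assms(1) by (simp add: p_DPL_set_def)
  then show "eventually (\<lambda>n. \<forall>T\<in>L. norm (blinfun_apply T (x n)) < e) sequentially"
    by eventually_elim (use assms(2) in blast)
qed

lemma norm_blinfun_bound_cball:
  assumes "0 \<le> b" and "\<And>v. v \<in> cball 0 1 \<Longrightarrow> norm (blinfun_apply f v) \<le> b"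
  shows "norm f \<le> b"
proof (rule norm_blinfun_bound[OF assms(1)])
  fix v
  show "norm (blinfun_apply f v) \<le> b * norm v"
  proof (cases "v = 0")
    case False
    then have "norm (blinfun_apply f (v /\<^sub>R norm v)) \<le> b"
      by (intro assms(2)) simp
    then show ?thesis
      using False by (simp add: blinfun.scaleR_right field_simps)
  qed simp
qed

lemma uniformly_null_on_precompact:
  fixes g :: "nat \<Rightarrow> 'a::metric_space \<Rightarrow> real"
  assumes "compact (closure S)"
    and lipschitz: "\<And>n u v. \<bar>g n u - g n v\<bar> \<le> dist u v"
    and null: "\<And>u. u \<in> S \<Longrightarrow> (\<lambda>n. g n u) \<longlonglongrightarrow> 0"
    and "e > 0"
  shows "eventually (\<lambda>n. \<forall>u\<in>S. \<bar>g n u\<bar> < e) sequentially"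
proof -
  obtain k where "finite k" and "k \<subseteq> closure S" and cover: "closure S \<subseteq> (\<Union>c\<in>k. ball c (e/4))"
    using seq_compact_imp_totally_bounded[OF compact_imp_seq_compact[OF assms(1)], rule_format, of "e/4"]
      \<open>e > 0\<close>
    by auto
  have "\<exists>s\<in>S. dist s c < e/4" if "c \<in> k" for c
  proof -
    have "c \<in> closure S"
      using that \<open>k \<subseteq> closure S\<close> by blast
    then show ?thesis
      using \<open>e > 0\<close> unfolding closure_approachable by (meson divide_pos_pos zero_less_numeral)
  qed
  then obtain s where s: "\<And>c. c \<in> k \<Longrightarrow> s c \<in> S \<and> dist (s c) c < e/4"
    by metis
  have "\<forall>c\<in>k. eventually (\<lambda>n. \<bar>g n (s c)\<bar> < e/2) sequentially"
  proof
    fix c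
    assume "c \<in> k"
    then have "s c \<in> S"
      using s by blast
    then have "(\<lambda>n. \<bar>g n (s c)\<bar>) \<longlonglongrightarrow> 0"
      by (intro tendsto_rabs_zero null)
    then show "eventually (\<lambda>n. \<bar>g n (s c)\<bar> < e/2) sequentially"
      by (rule order_tendstoD(2)) (use \<open>e > 0\<close> in simp)
  qed
  then have "eventually (\<lambda>n. \<forall>c\<in>k. \<bar>g n (s c)\<bar> < e/2) sequentially"
    by (rule eventually_ball_finite[OF \<open>finite k\<close>])
  then show ?thesis
  proof eventually_elim
    case (elim n)
    show ?case
    proof
      fix u
      assume "u \<in> S"
      then have "u \<in> closure S"
        using closure_subset by blast
      then obtain c where "c \<in> k" and "dist c u < e/4"
        using cover by auto
      then have "dist u (s c) < e/2"
        using s[of c] dist_triangle[of u "s c" c] dist_commute[of c u] dist_commute[of c "s c"]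
        by linarith
      moreover have "\<bar>g n (s c)\<bar> < e/2"
        using elim \<open>c \<in> k\<close> by blast
      ultimately show "\<bar>g n u\<bar> < e"
        using lipschitz[of n u "s c"] by linarith
    qed
  qed
qed

text \<open>\<open>v \<mapsto> (y\<^sub>n v)\<^sub>n\<close> as an operator into \<open>\<ell>\<^sub>\<infinity>\<close>, i.e. the bounded sequences
  \<open>nat \<Rightarrow>\<^sub>C 'b\<close>; junk unless \<open>y\<close> is bounded.\<close>
definition seq_operator ::
    "(nat \<Rightarrow> ('a::real_normed_vector \<Rightarrow>\<^sub>L 'b::real_normed_vector)) \<Rightarrow> 'a \<Rightarrow>\<^sub>L (nat \<Rightarrow>\<^sub>C 'b)" where
  "seq_operator y = Blinfun (\<lambda>v. Bcontfun (\<lambda>n. blinfun_apply (y n) v))"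

lemma seq_operator_apply:
  assumes "Bseq y"
  shows "apply_bcontfun (blinfun_apply (seq_operator y) v) n = blinfun_apply (y n) v"
proof -
  obtain K where K: "\<And>n. norm (y n) \<le> K"
    using assms by (auto simp: Bseq_def)
  have bound: "norm (blinfun_apply (y n) v) \<le> K * norm v" for n v
    using norm_blinfun[of "y n" v] K[of n] by (meson mult_right_mono norm_ge_zero order_trans)
  define Y where "Y v = Bcontfun (\<lambda>n. blinfun_apply (y n) v)" for v
  have "(\<lambda>n. blinfun_apply (y n) v) \<in> bcontfun" for v
    by (rule bcontfun_normI[OF _ bound]) (simp add: continuous_on_discrete)
  then have coord: "apply_bcontfun (Y v) n = blinfun_apply (y n) v" for v n
    by (simp add: Y_def Bcontfun_inverse)
  have "bounded_linear Y"
  proof (rule bounded_linear_intro[where K=K])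
    show "Y (a + b) = Y a + Y b" for a b
      by (rule bcontfun_eqI) (simp add: coord blinfun.add_right)
    show "Y (r *\<^sub>R a) = r *\<^sub>R Y a" for r a
      by (rule bcontfun_eqI) (simp add: coord blinfun.scaleR_right)
    show "norm (Y a) \<le> norm a * K" for a
      by (rule norm_bound) (simp add: coord bound mult.commute)
  qed
  then show ?thesis
    by (simp add: seq_operator_def Y_def[symmetric] bounded_linear_Blinfun_apply coord)
qed

lemma p_DPL_set_seq_operator:
  fixes y :: "nat \<Rightarrow> ('a::real_normed_vector \<Rightarrow>\<^sub>L real)"
  assumes "0 < p" and "weakly_null y" and "Bseq y"
  shows "p_DPL_set p {seq_operator y}"
  unfolding p_DPL_set_def
proof (intro allI impI)
  fix x :: "nat \<Rightarrow> 'a" and e :: real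
  assume "p_right_null p x" and "e > 0"
  then have "dunford_pettis_set (range x)" and wx: "weakly_null x"
    using assms(1) weakly_p_summable_imp_weakly_null by (auto simp: p_right_null_def)
  then have "eventually (\<lambda>n. \<forall>v\<in>range x. \<bar>blinfun_apply (y n) v\<bar> < e/2) sequentially"
    using assms(2) \<open>e > 0\<close> unfolding dunford_pettis_set_def by (meson half_gt_zero)
  then obtain N where tail: "\<And>n k. n \<ge> N \<Longrightarrow> \<bar>blinfun_apply (y n) (x k)\<bar> < e/2"
    unfolding eventually_sequentially by blast
  have "eventually (\<lambda>k. \<bar>blinfun_apply (y n) (x k)\<bar> < e/2) sequentially" for n
    using wx \<open>e > 0\<close>
    by (intro order_tendstoD(2)[OF tendsto_rabs_zero]) (simp_all add: weakly_null_def)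
  then have "eventually (\<lambda>k. \<forall>n\<in>{..<N}. \<bar>blinfun_apply (y n) (x k)\<bar> < e/2) sequentially"
    by (intro eventually_ball_finite) auto
  then show "eventually (\<lambda>k. \<forall>T\<in>{seq_operator y}. norm (blinfun_apply T (x k)) < e) sequentially"
  proof eventually_elim
    case (elim k)
    have "\<bar>blinfun_apply (y n) (x k)\<bar> < e/2" for n
    proof (cases "n < N")
      case True
      then show ?thesis
        using elim by simp
    next
      case False
      then show ?thesis
        using tail by simp
    qed
    then have "norm (blinfun_apply (seq_operator y) (x k)) \<le> e/2"
      by (intro norm_bound) (simp add: seq_operator_apply[OF assms(3)] less_imp_le)
    then show ?case
      using \<open>e > 0\<close> by simp
  qed
qed

lemma compact_seq_operator_imp_tendsto_zero:
  fixes y :: "nat \<Rightarrow> ('a::real_normed_vector \<Rightarrow>\<^sub>L 'b::real_normed_vector)"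
  assumes "Bseq y" and "compact_operator (seq_operator y)"
    and "\<And>v. (\<lambda>n. blinfun_apply (y n) v) \<longlonglongrightarrow> 0"
  shows "y \<longlonglongrightarrow> 0"
proof -
  let ?S = "blinfun_apply (seq_operator y) ` cball 0 1"
  have "eventually (\<lambda>n. norm (y n) < e) sequentially" if "e > 0" for e
  proof -
    have "eventually (\<lambda>n. \<forall>w\<in>?S. \<bar>norm (apply_bcontfun w n)\<bar> < e/2) sequentially"
    proof (rule uniformly_null_on_precompact)
      show "compact (closure ?S)"
        using assms(2) by (simp add: compact_operator_def)
      show "\<bar>norm (apply_bcontfun u n) - norm (apply_bcontfun w n)\<bar> \<le> dist u w"
        for n :: nat and u w :: "nat \<Rightarrow>\<^sub>C 'b"
        by (rule order_trans[OF _ dist_bounded[of u n w]]) (simp add: dist_norm norm_triangle_ineq3)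
      show "(\<lambda>n. norm (apply_bcontfun w n)) \<longlonglongrightarrow> 0" if "w \<in> ?S" for w
        using that assms(3) by (auto simp: seq_operator_apply[OF assms(1)] tendsto_norm_zero)
    qed (use that in simp)
    then show ?thesis
    proof eventually_elim
      case (elim n)
      have "norm (blinfun_apply (y n) v) \<le> e/2" if "v \<in> cball 0 1" for v
        using bspec[OF elim imageI[OF that]] by (simp add: seq_operator_apply[OF assms(1)])
      then have "norm (y n) \<le> e/2"
        using that by (intro norm_blinfun_bound_cball) auto
      then show ?case
        using that by simp
    qed
  qed
  then show ?thesis
    by (simp add: tendsto_iff)
qed

theorem proposition3p12:
  fixes p :: ereal and U :: "'a::banach set"
  assumes "1 \<le> p"
    and "open U" and "convex U" and "U \<noteq> {}"
    and "\<forall>Y::(nat \<Rightarrow>\<^sub>C real) set. closed Y \<and> subspace Y \<longrightarrow>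
           (\<forall>(f::'a \<Rightarrow> (nat \<Rightarrow>\<^sub>C real)) f'.
              f ` U \<subseteq> Y \<and> C1u U f f' \<and> (\<forall>B. U_bounded U B \<longrightarrow> p_DPL_set p (f' ` B))
              \<longrightarrow> compact_map U f' \<and> (\<forall>x\<in>U. compact_operator (f' x)))"
  shows "schur_property TYPE('a \<Rightarrow>\<^sub>L real)"
proof (rule ccontr)
  assume "\<not> schur_property TYPE('a \<Rightarrow>\<^sub>L real)"
  then obtain y :: "nat \<Rightarrow> ('a \<Rightarrow>\<^sub>L real)" where y: "weakly_null y" and unit: "\<And>n. norm (y n) = 1"
    by (rule not_schur_property_imp_weakly_null_unit_seq) blast
  have "Bseq y"
    using unit by (intro BseqI[of 1]) auto
  define T where "T = seq_operator y"
  have "0 < p"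
    using assms(1) by (cases p) auto
  from this y \<open>Bseq y\<close> have "p_DPL_set p {T}"
    unfolding T_def by (rule p_DPL_set_seq_operator)
  then have DPL: "p_DPL_set p ((\<lambda>_. T) ` B)" for B
    by (rule p_DPL_set_subset) blast
  have "compact_map U (\<lambda>_. T) \<and> (\<forall>x\<in>U. compact_operator T)"
  proof (rule assms(5)[rule_format, of UNIV "blinfun_apply T" "\<lambda>_. T"])
    show "closed UNIV \<and> subspace UNIV"
      by simp
    show "blinfun_apply T ` U \<subseteq> UNIV \<and> C1u U (blinfun_apply T) (\<lambda>_. T) \<and>
        (\<forall>B. U_bounded U B \<longrightarrow> p_DPL_set p ((\<lambda>_. T) ` B))"
      using C1u_blinfun DPL by blast
  qed
  then have "compact_operator T"
    using \<open>U \<noteq> {}\<close> by blast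
  then have "y \<longlonglongrightarrow> 0"
    unfolding T_def
    by (rule compact_seq_operator_imp_tendsto_zero[OF \<open>Bseq y\<close> _ weakly_null_dual_imp_tendsto_pointwise[OF y]])
  then have "(\<lambda>n. norm (y n)) \<longlonglongrightarrow> 0"
    by (rule tendsto_norm_zero)
  then show False
    by (simp add: unit LIMSEQ_const_iff)
qed

end
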